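(* Let $\mathfrak{G}$ be a topologically Noetherian profinite group. Then every minimal equicontinuous continuous action $\widehat{\Phi}\colon\mathfrak{G}\times\mathfrak{X}\to\mathfrak{X}$ of $\mathfrak{G}$ on a Cantor space $\mathfrak{X}$ is locally quasi-analytic.
   Context: A profinite group is topologically Noetherian if every increasing chain of closed subgroups has a maximal element. An action of a group $G$ by homeomorphisms on a metric Cantor space $\mathfrak{X}$ is locally quasi-analytic if there exists $\varepsilon>0$ such that for every nonempty open $U\subset\mathfrak{X}$ with $\mathrm{diam}(U)<\varepsilon$, every nonempty open $V\subset U$, and all $g_1,g_2\in G$: if the actions of $g_1$ and $g_2$ agree on $V$, then they agree on $U$. Minimal means every orbit is dense. *)

theory Defs
  imports "HOL-Analysis.Analysis" "HOL-Algebra.Group"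
begin

definition totally_disconnected_space :: "'a topology \<Rightarrow> bool" where
  "totally_disconnected_space T \<longleftrightarrow>
     (\<forall>S. S \<subseteq> topspace T \<and> connectedin T S \<longrightarrow> (\<exists>a. S \<subseteq> {a}))"

definition topological_group :: "('g, 'm) monoid_scheme \<Rightarrow> 'g topology \<Rightarrow> bool" where
  "topological_group G T \<longleftrightarrow> group G \<and> topspace T = carrier G \<and>
     continuous_map (prod_topology T T) T (\<lambda>(x, y). x \<otimes>\<^bsub>G\<^esub> y) \<and>
     continuous_map T T (\<lambda>x. inv\<^bsub>G\<^esub> x)"

definition profinite_group :: "('g, 'm) monoid_scheme \<Rightarrow> 'g topology \<Rightarrow> bool" where
  "profinite_group G T \<longleftrightarrow> topological_group G T \<and> compact_space T \<and>
     Hausdorff_space T \<and> totally_disconnected_space T"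

definition topologically_noetherian :: "('g, 'm) monoid_scheme \<Rightarrow> 'g topology \<Rightarrow> bool" where
  "topologically_noetherian G T \<longleftrightarrow>
     (\<forall>H :: nat \<Rightarrow> 'g set.
        (\<forall>n. subgroup (H n) G \<and> closedin T (H n)) \<and> (\<forall>n. H n \<subseteq> H (Suc n))
        \<longrightarrow> (\<exists>n. \<forall>m. H m \<subseteq> H n))"

definition cantor_space :: "'x::metric_space set \<Rightarrow> bool" where
  "cantor_space X \<longleftrightarrow>
     (top_of_set X) homeomorphic_space
       (product_topology (\<lambda>_::nat. discrete_topology (UNIV :: bool set)) UNIV)"

definition continuous_action ::
  "('g, 'm) monoid_scheme \<Rightarrow> 'g topology \<Rightarrow> 'x::metric_space set \<Rightarrow> ('g \<Rightarrow> 'x \<Rightarrow> 'x) \<Rightarrow> bool" where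
  "continuous_action G T X \<Phi> \<longleftrightarrow>
     (\<forall>g\<in>carrier G. \<forall>x\<in>X. \<Phi> g x \<in> X) \<and>
     (\<forall>x\<in>X. \<Phi> \<one>\<^bsub>G\<^esub> x = x) \<and>
     (\<forall>g\<in>carrier G. \<forall>h\<in>carrier G. \<forall>x\<in>X. \<Phi> (g \<otimes>\<^bsub>G\<^esub> h) x = \<Phi> g (\<Phi> h x)) \<and>
     continuous_map (prod_topology T (top_of_set X)) (top_of_set X) (\<lambda>(g, x). \<Phi> g x)"

definition minimal_action :: "('g, 'm) monoid_scheme \<Rightarrow> 'x::metric_space set \<Rightarrow> ('g \<Rightarrow> 'x \<Rightarrow> 'x) \<Rightarrow> bool" where
  "minimal_action G X \<Phi> \<longleftrightarrow> (\<forall>x\<in>X. X \<subseteq> closure ((\<lambda>g. \<Phi> g x) ` carrier G))"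

definition equicontinuous_action :: "('g, 'm) monoid_scheme \<Rightarrow> 'x::metric_space set \<Rightarrow> ('g \<Rightarrow> 'x \<Rightarrow> 'x) \<Rightarrow> bool" where
  "equicontinuous_action G X \<Phi> \<longleftrightarrow>
     (\<forall>e>0. \<exists>d>0. \<forall>x\<in>X. \<forall>y\<in>X. dist x y < d \<longrightarrow>
        (\<forall>g\<in>carrier G. dist (\<Phi> g x) (\<Phi> g y) < e))"

definition locally_quasi_analytic :: "('g, 'm) monoid_scheme \<Rightarrow> 'x::metric_space set \<Rightarrow> ('g \<Rightarrow> 'x \<Rightarrow> 'x) \<Rightarrow> bool" where
  "locally_quasi_analytic G X \<Phi> \<longleftrightarrow>
     (\<exists>e>0. \<forall>U V. openin (top_of_set X) U \<and> U \<noteq> {} \<and> diameter U < e \<and>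
        openin (top_of_set X) V \<and> V \<noteq> {} \<and> V \<subseteq> U \<longrightarrow>
        (\<forall>g1\<in>carrier G. \<forall>g2\<in>carrier G.
           (\<forall>x\<in>V. \<Phi> g1 x = \<Phi> g2 x) \<longrightarrow> (\<forall>x\<in>U. \<Phi> g1 x = \<Phi> g2 x)))"

end

theory Submission
  imports Defs
begin

text \<open>The pointwise stabilisers of nonempty open sets are closed subgroups, so by
  Noetherianity one of them, belonging to an open set \<open>W\<^sub>0\<close>, is maximal. Shrinking an
  open set only enlarges its stabiliser, hence all nonempty open subsets of \<open>W\<^sub>0\<close> have
  the same stabiliser; this says that the action is quasi-analytic on \<open>W\<^sub>0\<close>. Conjugation
  carries this property to every translate of \<open>W\<^sub>0\<close>, by minimality the translates cover
  \<open>X\<close>, and a Lebesgue number of this cover of the compact space \<open>X\<close> is the required \<open>\<epsilon>\<close>.\<close>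

lemma topologically_noetherian_has_maximal:
  assumes noetherian: "topologically_noetherian G T"
    and "F \<noteq> {}"
    and closed_subgroups: "\<And>S. S \<in> F \<Longrightarrow> subgroup S G \<and> closedin T S"
  shows "\<exists>M\<in>F. \<forall>S\<in>F. M \<subseteq> S \<longrightarrow> S = M"
proof (rule ccontr)
  assume "\<not> ?thesis"
  then obtain f where f: "\<And>M. M \<in> F \<Longrightarrow> f M \<in> F \<and> M \<subset> f M"
    by (metis psubsetI)
  obtain M0 where "M0 \<in> F" using \<open>F \<noteq> {}\<close> by blast
  define H where "H n = (f ^^ n) M0" for n
  have H_in: "H n \<in> F" for n
    by (induction n) (auto simp: H_def \<open>M0 \<in> F\<close> f)
  have H_strict: "H n \<subset> H (Suc n)" for n
    using f[OF H_in[of n]] by (simp add: H_def)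
  obtain n where "\<forall>m. H m \<subseteq> H n"
    using noetherian H_in closed_subgroups H_strict
    unfolding topologically_noetherian_def by blast
  with H_strict[of n] show False by blast
qed

lemma cantor_space_imp_compact:
  assumes "cantor_space X"
  shows "compact X"
proof -
  have "compact_space (product_topology (\<lambda>_::nat. discrete_topology (UNIV :: bool set)) UNIV)"
    by (simp add: compact_space_product_topology compact_space_discrete_topology)
  then have "compact_space (top_of_set X)"
    using assms homeomorphic_compact_space unfolding cantor_space_def by blast
  then show ?thesis
    using compactin_subspace[of euclidean X] by simp
qed

locale continuous_group_action = group G
  for G :: "('g, 'm) monoid_scheme" (structure) +
  fixes T :: "'g topology" and X :: "'x::metric_space set" and \<Phi> :: "'g \<Rightarrow> 'x \<Rightarrow> 'x"
  assumes topspace_eq_carrier: "topspace T = carrier G"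
    and continuous_action: "continuous_action G T X \<Phi>"
begin

lemma action_closed: "g \<in> carrier G \<Longrightarrow> x \<in> X \<Longrightarrow> \<Phi> g x \<in> X"
  and action_one: "x \<in> X \<Longrightarrow> \<Phi> \<one> x = x"
  and action_mult: "g \<in> carrier G \<Longrightarrow> h \<in> carrier G \<Longrightarrow> x \<in> X \<Longrightarrow> \<Phi> (g \<otimes> h) x = \<Phi> g (\<Phi> h x)"
  and continuous_map_action_pair:
    "continuous_map (prod_topology T (top_of_set X)) (top_of_set X) (\<lambda>(g, x). \<Phi> g x)"
  using continuous_action unfolding continuous_action_def by auto

lemma action_inv_left: "g \<in> carrier G \<Longrightarrow> x \<in> X \<Longrightarrow> \<Phi> (inv g) (\<Phi> g x) = x"
  using action_mult[of "inv g" g x] action_one by simp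

lemma action_inv_right: "g \<in> carrier G \<Longrightarrow> x \<in> X \<Longrightarrow> \<Phi> g (\<Phi> (inv g) x) = x"
  using action_mult[of g "inv g" x] action_one by simp

lemma continuous_map_action:
  assumes "g \<in> carrier G"
  shows "continuous_map (top_of_set X) (top_of_set X) (\<Phi> g)"
proof -
  have "continuous_map (top_of_set X) (prod_topology T (top_of_set X)) (\<lambda>x. (g, x))"
    using assms topspace_eq_carrier by (simp add: continuous_map_pairwise o_def)
  from continuous_map_compose[OF this continuous_map_action_pair] show ?thesis
    by (simp add: o_def)
qed

lemma continuous_map_orbit:
  assumes "x \<in> X"
  shows "continuous_map T (top_of_set X) (\<lambda>g. \<Phi> g x)"
proof -
  have "continuous_map T (prod_topology T (top_of_set X)) (\<lambda>g. (g, x))"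
    using assms by (simp add: continuous_map_pairwise o_def)
  from continuous_map_compose[OF this continuous_map_action_pair] show ?thesis
    by (simp add: o_def)
qed

lemma homeomorphic_map_action:
  assumes "g \<in> carrier G"
  shows "homeomorphic_map (top_of_set X) (top_of_set X) (\<Phi> g)"
proof -
  have "homeomorphic_maps (top_of_set X) (top_of_set X) (\<Phi> g) (\<Phi> (inv g))"
    using assms continuous_map_action[of g] continuous_map_action[of "inv g"]
    by (auto simp: homeomorphic_maps_def action_inv_left action_inv_right)
  then show ?thesis
    by (auto simp: homeomorphic_map_maps)
qed

definition pointwise_stabilizer :: "'x set \<Rightarrow> 'g set" where
  "pointwise_stabilizer W = {h \<in> carrier G. \<forall>x\<in>W. \<Phi> h x = x}"

lemma pointwise_stabilizer_antimono:
  "V \<subseteq> U \<Longrightarrow> pointwise_stabilizer U \<subseteq> pointwise_stabilizer V"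
  by (auto simp: pointwise_stabilizer_def)

lemma subgroup_pointwise_stabilizer:
  assumes "W \<subseteq> X"
  shows "subgroup (pointwise_stabilizer W) G"
proof
  show "pointwise_stabilizer W \<subseteq> carrier G"
    by (auto simp: pointwise_stabilizer_def)
  show "\<one> \<in> pointwise_stabilizer W"
    using assms action_one by (auto simp: pointwise_stabilizer_def)
  show "g \<otimes> h \<in> pointwise_stabilizer W"
    if "g \<in> pointwise_stabilizer W" "h \<in> pointwise_stabilizer W" for g h
    using that assms action_mult by (auto simp: pointwise_stabilizer_def)
  show "inv g \<in> pointwise_stabilizer W" if "g \<in> pointwise_stabilizer W" for g
    using that assms action_inv_left by (fastforce simp: pointwise_stabilizer_def)
qed

lemma closedin_pointwise_stabilizer:
  assumes "W \<subseteq> X"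
  shows "closedin T (pointwise_stabilizer W)"
proof (cases "W = {}")
  case True
  then show ?thesis
    using topspace_eq_carrier closedin_topspace[of T] by (simp add: pointwise_stabilizer_def)
next
  case False
  have "pointwise_stabilizer W = (\<Inter>x\<in>W. {g \<in> topspace T. \<Phi> g x \<in> {x}})"
    using False topspace_eq_carrier by (auto simp: pointwise_stabilizer_def)
  moreover have "closedin T {g \<in> topspace T. \<Phi> g x \<in> {x}}" if "x \<in> W" for x
    using that assms
    by (intro closedin_continuous_map_preimage[OF continuous_map_orbit])
       (auto simp: closedin_subtopology)
  ultimately show ?thesis
    using False by (auto intro!: closedin_Inter)
qed

definition quasi_analytic_on :: "'x set \<Rightarrow> bool" where
  "quasi_analytic_on W \<longleftrightarrow>
     (\<forall>U V. openin (top_of_set X) V \<and> V \<noteq> {} \<and> V \<subseteq> U \<and> U \<subseteq> W \<longrightarrow>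
        (\<forall>g1\<in>carrier G. \<forall>g2\<in>carrier G.
           (\<forall>x\<in>V. \<Phi> g1 x = \<Phi> g2 x) \<longrightarrow> (\<forall>x\<in>U. \<Phi> g1 x = \<Phi> g2 x)))"

lemma quasi_analytic_onD:
  assumes "quasi_analytic_on W" "openin (top_of_set X) V" "V \<noteq> {}" "V \<subseteq> U" "U \<subseteq> W"
    and "g1 \<in> carrier G" "g2 \<in> carrier G" "\<And>x. x \<in> V \<Longrightarrow> \<Phi> g1 x = \<Phi> g2 x" "x \<in> U"
  shows "\<Phi> g1 x = \<Phi> g2 x"
  using quasi_analytic_on_def[THEN iffD1, rule_format, OF assms(1) _ assms(6-9)] assms(2-5)
  by blast

lemma quasi_analytic_on_if_maximal_stabilizer:
  assumes "W \<subseteq> X"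
    and maximal: "\<And>V. openin (top_of_set X) V \<Longrightarrow> V \<noteq> {} \<Longrightarrow>
      pointwise_stabilizer W \<subseteq> pointwise_stabilizer V \<Longrightarrow>
      pointwise_stabilizer V = pointwise_stabilizer W"
  shows "quasi_analytic_on W"
  unfolding quasi_analytic_on_def
proof (intro allI impI ballI)
  fix U V g1 g2 x
  assume UV: "openin (top_of_set X) V \<and> V \<noteq> {} \<and> V \<subseteq> U \<and> U \<subseteq> W"
    and g: "g1 \<in> carrier G" "g2 \<in> carrier G"
    and agree: "\<forall>x\<in>V. \<Phi> g1 x = \<Phi> g2 x" and "x \<in> U"
  have "V \<subseteq> X" "x \<in> X"
    using UV \<open>W \<subseteq> X\<close> \<open>x \<in> U\<close> by auto
  have "pointwise_stabilizer W \<subseteq> pointwise_stabilizer V"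
    using UV by (intro pointwise_stabilizer_antimono) blast
  then have "pointwise_stabilizer V = pointwise_stabilizer W"
    using UV by (intro maximal) auto
  moreover have "pointwise_stabilizer W \<subseteq> pointwise_stabilizer U"
    "pointwise_stabilizer U \<subseteq> pointwise_stabilizer V"
    using UV by (simp_all add: pointwise_stabilizer_antimono)
  ultimately have same: "pointwise_stabilizer V = pointwise_stabilizer U"
    by blast
  have "\<Phi> (inv g2 \<otimes> g1) y = y" if "y \<in> V" for y
    using that agree g \<open>V \<subseteq> X\<close> action_mult action_inv_left by (simp add: subset_iff)
  then have "inv g2 \<otimes> g1 \<in> pointwise_stabilizer V"
    using g by (simp add: pointwise_stabilizer_def)
  then have "inv g2 \<otimes> g1 \<in> pointwise_stabilizer U"
    by (simp only: same)
  then have "\<Phi> (inv g2 \<otimes> g1) x = x"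
    using \<open>x \<in> U\<close> by (simp add: pointwise_stabilizer_def)
  then have "\<Phi> (inv g2) (\<Phi> g1 x) = x"
    using \<open>x \<in> X\<close> g by (simp add: action_mult)
  moreover have "\<Phi> g1 x = \<Phi> g2 (\<Phi> (inv g2) (\<Phi> g1 x))"
    using \<open>x \<in> X\<close> g by (simp add: action_closed action_inv_right)
  ultimately show "\<Phi> g1 x = \<Phi> g2 x"
    by simp
qed

lemma quasi_analytic_on_preimage:
  assumes "quasi_analytic_on W" and g: "g \<in> carrier G"
  shows "quasi_analytic_on {y \<in> X. \<Phi> g y \<in> W}"
  unfolding quasi_analytic_on_def
proof (intro allI impI ballI)
  fix U V g1 g2 x
  assume UV: "openin (top_of_set X) V \<and> V \<noteq> {} \<and> V \<subseteq> U \<and> U \<subseteq> {y \<in> X. \<Phi> g y \<in> W}"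
    and g12: "g1 \<in> carrier G" "g2 \<in> carrier G"
    and agree: "\<forall>x\<in>V. \<Phi> g1 x = \<Phi> g2 x" and "x \<in> U"
  have "V \<subseteq> X" "x \<in> X"
    using UV \<open>x \<in> U\<close> by auto
  define conj where "conj h = g \<otimes> h \<otimes> inv g" for h
  have conj_closed: "conj h \<in> carrier G" if "h \<in> carrier G" for h
    using that g by (simp add: conj_def)
  have conj_action: "\<Phi> (conj h) (\<Phi> g y) = \<Phi> g (\<Phi> h y)" if "h \<in> carrier G" "y \<in> X" for h y
    using that g by (simp add: conj_def action_mult action_closed action_inv_left)
  have open_image: "openin (top_of_set X) (\<Phi> g ` V)"
    using homeomorphic_map_openness[OF homeomorphic_map_action[OF g]] UV \<open>V \<subseteq> X\<close> by simp
  have image_subsets: "\<Phi> g ` V \<noteq> {}" "\<Phi> g ` V \<subseteq> \<Phi> g ` U" "\<Phi> g ` U \<subseteq> W"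
    using UV by auto
  have agree_image: "\<Phi> (conj g1) y = \<Phi> (conj g2) y" if "y \<in> \<Phi> g ` V" for y
    using that agree conj_action g12 \<open>V \<subseteq> X\<close> by auto
  have "\<Phi> (conj g1) (\<Phi> g x) = \<Phi> (conj g2) (\<Phi> g x)"
    using \<open>x \<in> U\<close> by (intro quasi_analytic_onD[OF \<open>quasi_analytic_on W\<close> open_image image_subsets
        conj_closed[OF g12(1)] conj_closed[OF g12(2)] agree_image]) simp_all
  then have "\<Phi> g (\<Phi> g1 x) = \<Phi> g (\<Phi> g2 x)"
    using conj_action g12 \<open>x \<in> X\<close> by simp
  then have "\<Phi> (inv g) (\<Phi> g (\<Phi> g1 x)) = \<Phi> (inv g) (\<Phi> g (\<Phi> g2 x))"
    by simp
  then show "\<Phi> g1 x = \<Phi> g2 x"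
    using g g12 \<open>x \<in> X\<close> by (simp add: action_closed action_inv_left)
qed

lemma topologically_noetherian_quasi_analytic_open:
  assumes "topologically_noetherian G T" and "X \<noteq> {}"
  obtains W where "openin (top_of_set X) W" "W \<noteq> {}" "quasi_analytic_on W"
proof -
  define F where "F = {pointwise_stabilizer W | W. openin (top_of_set X) W \<and> W \<noteq> {}}"
  have "F \<noteq> {}"
    using \<open>X \<noteq> {}\<close> by (auto simp: F_def)
  moreover have "subgroup S G \<and> closedin T S" if "S \<in> F" for S
    using that subgroup_pointwise_stabilizer closedin_pointwise_stabilizer
    by (auto simp: F_def dest: openin_subset)
  ultimately obtain M where "M \<in> F" and maximal: "\<forall>S\<in>F. M \<subseteq> S \<longrightarrow> S = M"
    using topologically_noetherian_has_maximal[OF assms(1)] by blast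
  then obtain W where W: "openin (top_of_set X) W" "W \<noteq> {}" and "M = pointwise_stabilizer W"
    by (auto simp: F_def)
  have "W \<subseteq> X"
    using W(1) openin_subset by fastforce
  then have "quasi_analytic_on W"
    using maximal \<open>M = pointwise_stabilizer W\<close>
    by (intro quasi_analytic_on_if_maximal_stabilizer) (auto simp: F_def)
  with W that show ?thesis by blast
qed

lemma minimal_action_translate_into_open:
  assumes "minimal_action G X \<Phi>" and W: "openin (top_of_set X) W" "W \<noteq> {}" and "y \<in> X"
  obtains g where "g \<in> carrier G" "\<Phi> g y \<in> W"
proof -
  obtain z where "z \<in> W" using W by blast
  obtain B where "open B" "W = X \<inter> B"
    using W by (auto simp: openin_open)
  have "z \<in> closure ((\<lambda>g. \<Phi> g y) ` carrier G)"
    using assms \<open>z \<in> W\<close> \<open>W = X \<inter> B\<close> unfolding minimal_action_def by blast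
  then obtain g where "g \<in> carrier G" "\<Phi> g y \<in> B"
    using \<open>open B\<close> \<open>z \<in> W\<close> \<open>W = X \<inter> B\<close> by (auto simp: closure_iff_nhds_not_empty)
  with that \<open>W = X \<inter> B\<close> \<open>y \<in> X\<close> action_closed show ?thesis by blast
qed

lemma locally_quasi_analytic_if_open_cover:
  assumes "compact X"
    and cover: "\<And>y. y \<in> X \<Longrightarrow> \<exists>W. openin (top_of_set X) W \<and> y \<in> W \<and> quasi_analytic_on W"
  shows "locally_quasi_analytic G X \<Phi>"
proof -
  define \<B> where "\<B> = {B. open B \<and> quasi_analytic_on (X \<inter> B)}"
  have "X \<subseteq> \<Union>\<B>"
    using cover by (force simp: \<B>_def openin_open)
  moreover have "open B" if "B \<in> \<B>" for B
    using that by (simp add: \<B>_def)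
  ultimately obtain e where "e > 0" and lebesgue: "\<And>x. x \<in> X \<Longrightarrow> \<exists>B\<in>\<B>. ball x e \<subseteq> B"
    using Heine_Borel_lemma[OF \<open>compact X\<close>] by blast
  show ?thesis
    unfolding locally_quasi_analytic_def
  proof (intro exI[of _ e] conjI \<open>e > 0\<close> allI impI ballI)
    fix U V g1 g2 x
    assume UV: "openin (top_of_set X) U \<and> U \<noteq> {} \<and> diameter U < e \<and>
      openin (top_of_set X) V \<and> V \<noteq> {} \<and> V \<subseteq> U"
      and g: "g1 \<in> carrier G" "g2 \<in> carrier G"
      and agree: "\<forall>x\<in>V. \<Phi> g1 x = \<Phi> g2 x" and "x \<in> U"
    have "U \<subseteq> X"
      using UV openin_subset by fastforce
    have "bounded U"
      using \<open>U \<subseteq> X\<close> \<open>compact X\<close> compact_imp_bounded bounded_subset by blast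
    have "U \<subseteq> ball x e"
    proof
      fix y
      assume "y \<in> U"
      then have "dist x y \<le> diameter U"
        using diameter_bounded_bound[OF \<open>bounded U\<close> \<open>x \<in> U\<close>] by blast
      then show "y \<in> ball x e"
        using UV by simp
    qed
    obtain B where "B \<in> \<B>" "ball x e \<subseteq> B"
      using lebesgue \<open>x \<in> U\<close> \<open>U \<subseteq> X\<close> by blast
    then have "quasi_analytic_on (X \<inter> B)" "U \<subseteq> X \<inter> B"
      using \<open>U \<subseteq> ball x e\<close> \<open>U \<subseteq> X\<close> by (auto simp: \<B>_def)
    from quasi_analytic_onD[of "X \<inter> B" V U, OF this(1) _ _ _ this(2) g _ \<open>x \<in> U\<close>]
    show "\<Phi> g1 x = \<Phi> g2 x"
      using UV agree by simp
  qed
qed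

end

theorem proposition3p4:
  fixes G :: "('g, 'm) monoid_scheme" and T :: "'g topology"
    and X :: "'x::metric_space set" and \<Phi> :: "'g \<Rightarrow> 'x \<Rightarrow> 'x"
  assumes "profinite_group G T"
    and "topologically_noetherian G T"
    and "cantor_space X"
    and "continuous_action G T X \<Phi>"
    and "minimal_action G X \<Phi>"
    and "equicontinuous_action G X \<Phi>"
  shows "locally_quasi_analytic G X \<Phi>"
proof -
  have "group G" "topspace T = carrier G"
    using assms(1) unfolding profinite_group_def topological_group_def by auto
  then interpret continuous_group_action G T X \<Phi>
    using assms(4) by (simp add: continuous_group_action_def continuous_group_action_axioms_def)
  show ?thesis
  proof (rule locally_quasi_analytic_if_open_cover)
    show "compact X"
      using assms(3) by (rule cantor_space_imp_compact)
    fix y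
    assume "y \<in> X"
    then obtain W where W: "openin (top_of_set X) W" "W \<noteq> {}" "quasi_analytic_on W"
      using topologically_noetherian_quasi_analytic_open[OF assms(2)] by blast
    then obtain g where g: "g \<in> carrier G" "\<Phi> g y \<in> W"
      using minimal_action_translate_into_open[OF assms(5)] \<open>y \<in> X\<close> by blast
    have "openin (top_of_set X) {z \<in> X. \<Phi> g z \<in> W}"
      using openin_continuous_map_preimage[OF continuous_map_action[OF g(1)] W(1)] by simp
    moreover have "quasi_analytic_on {z \<in> X. \<Phi> g z \<in> W}"
      using quasi_analytic_on_preimage[OF W(3) g(1)] .
    ultimately show "\<exists>W'. openin (top_of_set X) W' \<and> y \<in> W' \<and> quasi_analytic_on W'"
      using g(2) \<open>y \<in> X\<close> by (intro exI[of _ "{z \<in> X. \<Phi> g z \<in> W}"]) simp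
  qed
qed

end
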